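(* Let $n\ge 2$ and $u,v\in\{a,b\}^n$. If $\big||u|_c-|v|_c\big|=1$ for some $c\in\{a,b\}$, then $(u,v)$ is not an MAU pair.
   Context: Let $\Sigma=\{a,b\}$. For a word $w$ and a letter $c$, $|w|_c$ denotes the number of occurrences of $c$ in $w$. Two words $x,y$ are abelian equivalent, written $x\sim_{\mathrm{abl}}y$, if $|x|_c=|y|_c$ for all $c\in\Sigma$. For words $u,v$: a pair $(x,y)$ is an internal abelian-border of $(u,v)$ if $x$ is a nonempty proper suffix of $u$, $y$ is a proper prefix of $v$, and $x\sim_{\mathrm{abl}}y$; it is an external abelian-border of $(u,v)$ if $x$ is a nonempty proper prefix of $u$, $y$ is a proper suffix of $v$, and $x\sim_{\mathrm{abl}}y$. The pair $(u,v)$ is mutually abelian-bordered (MAB) if it has both an internal and an external abelian-border, and mutually abelian-unbordered (MAU) if it has neither. *)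

theory Defs
  imports Main "HOL-Library.Sublist"
begin

datatype letter = a | b

definition occ :: "letter list \<Rightarrow> letter \<Rightarrow> nat" where
  "occ w c = count_list w c"

definition abel_eq :: "letter list \<Rightarrow> letter list \<Rightarrow> bool" where
  "abel_eq x y \<longleftrightarrow> (\<forall>c. occ x c = occ y c)"

definition internal_abel_border :: "letter list \<Rightarrow> letter list \<Rightarrow> letter list \<Rightarrow> letter list \<Rightarrow> bool" where
  "internal_abel_border u v x y \<longleftrightarrow>
     x \<noteq> [] \<and> strict_suffix x u \<and> strict_prefix y v \<and> abel_eq x y"

definition external_abel_border :: "letter list \<Rightarrow> letter list \<Rightarrow> letter list \<Rightarrow> letter list \<Rightarrow> bool" where
  "external_abel_border u v x y \<longleftrightarrow>
     x \<noteq> [] \<and> strict_prefix x u \<and> strict_suffix y v \<and> abel_eq x y"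

definition MAB :: "letter list \<Rightarrow> letter list \<Rightarrow> bool" where
  "MAB u v \<longleftrightarrow> (\<exists>x y. internal_abel_border u v x y) \<and> (\<exists>x y. external_abel_border u v x y)"

definition MAU :: "letter list \<Rightarrow> letter list \<Rightarrow> bool" where
  "MAU u v \<longleftrightarrow> \<not> (\<exists>x y. internal_abel_border u v x y) \<and> \<not> (\<exists>x y. external_abel_border u v x y)"

end

theory Submission
  imports Defs
begin

text \<open>
  Write \<open>d = |u|\<^sub>a - |v|\<^sub>a\<close>; for binary words of equal length this is \<open>\<plusminus>1\<close> whatever letter
  the hypothesis names.  Let \<open>f k\<close> (resp. \<open>g k\<close>) be the number of \<open>a\<close>'s in the length-\<open>k\<close>
  suffix of \<open>u\<close> (of \<open>v\<close>) minus that in the length-\<open>k\<close> prefix of \<open>v\<close> (of \<open>u\<close>).  Internal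
  (external) abelian borders correspond to zeros of \<open>f\<close> (of \<open>g\<close>) in \<open>0 < k < n\<close>, both
  functions move by at most one per step, and \<open>f k - g (n - k) = d\<close>.  If \<open>(u, v)\<close> were
  MAU, then \<open>f 1\<close> could be neither \<open>0\<close> nor \<open>d\<close>, so \<open>f 1 = -d\<close>; symmetrically \<open>g 1 = d\<close>,
  whence \<open>f (n - 1) = 2 d\<close>.  So \<open>f\<close> changes sign on \<open>[1, n - 1]\<close> and must vanish there.
\<close>

lemma int_steps_zero_between:
  fixes f :: "nat \<Rightarrow> int"
  assumes steps: "\<forall>i. m \<le> i \<and> i < n \<longrightarrow> \<bar>f (Suc i) - f i\<bar> \<le> 1"
    and "m \<le> n" and "f m * f n \<le> 0"
  shows "\<exists>i. m \<le> i \<and> i \<le> n \<and> f i = 0"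
proof (cases "f m \<le> 0 \<and> 0 \<le> f n")
  case True
  then show ?thesis using nat_intermed_int_val[OF steps \<open>m \<le> n\<close>] by blast
next
  case False
  with \<open>f m * f n \<le> 0\<close> have "- f m \<le> 0 \<and> 0 \<le> - f n"
    by (auto simp: mult_le_0_iff)
  moreover have "\<forall>i. m \<le> i \<and> i < n \<longrightarrow> \<bar>- f (Suc i) - - f i\<bar> \<le> 1"
    using steps by auto
  ultimately show ?thesis
    using nat_intermed_int_val[of m n "\<lambda>i. - f i" 0] \<open>m \<le> n\<close> by auto
qed

lemma count_list_take_Suc_bounds:
  "count_list (take k xs) x \<le> count_list (take (Suc k) xs) x"
  "count_list (take (Suc k) xs) x \<le> count_list (take k xs) x + 1"
proof -
  have "take (Suc k) xs = take k xs @ take 1 (drop k xs)"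
    using take_add[of k 1 xs] by simp
  moreover have "count_list (take 1 (drop k xs)) x \<le> 1"
    using count_le_length[of "take 1 (drop k xs)" x] by simp
  ultimately show "count_list (take k xs) x \<le> count_list (take (Suc k) xs) x"
    "count_list (take (Suc k) xs) x \<le> count_list (take k xs) x + 1"
    by simp_all
qed

lemma count_list_drop_Suc_bounds:
  "count_list (drop (Suc k) xs) x \<le> count_list (drop k xs) x"
  "count_list (drop k xs) x \<le> count_list (drop (Suc k) xs) x + 1"
proof -
  have "drop k xs = take 1 (drop k xs) @ drop (Suc k) xs"
    by (metis append_take_drop_id drop_drop plus_1_eq_Suc)
  moreover have "count_list (take 1 (drop k xs)) x \<le> 1"
    using count_le_length[of "take 1 (drop k xs)" x] by simp
  ultimately show "count_list (drop (Suc k) xs) x \<le> count_list (drop k xs) x"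
    "count_list (drop k xs) x \<le> count_list (drop (Suc k) xs) x + 1"
    by (metis count_list_append le_add2, metis count_list_append add.commute add_le_mono1)
qed

lemma occ_a_plus_occ_b: "occ w a + occ w b = length w"
  unfolding occ_def
proof (induction w)
  case (Cons c w)
  then show ?case by (cases c) auto
qed simp

lemma abel_eq_iff_occ_a:
  assumes "length x = length y"
  shows "abel_eq x y \<longleftrightarrow> occ x a = occ y a"
  using occ_a_plus_occ_b[of x] occ_a_plus_occ_b[of y] assms
  unfolding abel_eq_def by (metis add_left_cancel letter.exhaust)

lemma abel_eq_length: "abel_eq x y \<Longrightarrow> length x = length y"
  using occ_a_plus_occ_b unfolding abel_eq_def by metis

lemma abs_occ_diff_letter_independent:
  assumes "length u = length v"
  shows "\<bar>int (occ u c) - int (occ v c)\<bar> = \<bar>int (occ u a) - int (occ v a)\<bar>"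
  using occ_a_plus_occ_b[of u] occ_a_plus_occ_b[of v] assms by (cases c) auto

lemma external_abel_border_if_swapped_internal:
  "internal_abel_border v u y x \<Longrightarrow> external_abel_border u v x y"
  unfolding internal_abel_border_def external_abel_border_def
  by (metis abel_eq_def abel_eq_length length_0_conv)

definition border_balance :: "letter list \<Rightarrow> letter list \<Rightarrow> nat \<Rightarrow> int" where
  "border_balance u v k = int (occ (drop (length u - k) u) a) - int (occ (take k v) a)"

lemma border_balance_0 [simp]: "border_balance u v 0 = 0"
  unfolding border_balance_def by simp

lemma border_balance_step: "\<bar>border_balance u v (Suc k) - border_balance u v k\<bar> \<le> 1"
proof (cases "k < length u")
  case True
  then have "length u - k = Suc (length u - Suc k)" by simp
  then show ?thesis
    using count_list_take_Suc_bounds[of k v a] count_list_drop_Suc_bounds[of "length u - Suc k" u a]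
    unfolding border_balance_def occ_def by simp
next
  case False
  then show ?thesis
    using count_list_take_Suc_bounds[of k v a] unfolding border_balance_def occ_def by simp
qed

lemma internal_abel_border_if_border_balance_0:
  assumes "length u = length v" "0 < k" "k < length u" "border_balance u v k = 0"
  shows "internal_abel_border u v (drop (length u - k) u) (take k v)"
proof -
  have "abel_eq (drop (length u - k) u) (take k v)"
    using assms by (simp add: abel_eq_iff_occ_a border_balance_def)
  moreover have "strict_suffix (drop (length u - k) u) u" "strict_prefix (take k v) v"
    using assms by (auto simp: strict_suffix_def strict_prefix_def suffix_drop take_is_prefix
        dest: arg_cong[of _ _ length])
  ultimately show ?thesis
    using assms unfolding internal_abel_border_def by auto
qed

lemma border_balance_swap:
  assumes "length u = length v" "k \<le> length u"
  shows "border_balance u v k - border_balance v u (length u - k) = int (occ u a) - int (occ v a)"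
proof -
  have "occ (take (length u - k) u) a + occ (drop (length u - k) u) a = occ u a"
    "occ (take k v) a + occ (drop k v) a = occ v a"
    unfolding occ_def by (metis append_take_drop_id count_list_append)+
  then show ?thesis
    using assms unfolding border_balance_def by simp
qed

lemma border_balance_1:
  assumes "length u = length v" "2 \<le> length u"
    and no_uv: "\<not> (\<exists>x y. internal_abel_border u v x y)"
    and no_vu: "\<not> (\<exists>x y. internal_abel_border v u x y)"
    and "\<bar>int (occ u a) - int (occ v a)\<bar> = 1"
  shows "border_balance u v 1 = - (int (occ u a) - int (occ v a))"
proof -
  have "\<bar>border_balance u v 1\<bar> \<le> 1"
    using border_balance_step[of u v 0] by simp
  moreover have "border_balance u v 1 \<noteq> 0"
    using internal_abel_border_if_border_balance_0[of u v 1] assms by auto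
  moreover have "border_balance v u (length u - 1) \<noteq> 0"
    using internal_abel_border_if_border_balance_0[of v u "length u - 1"] assms by force
  ultimately show ?thesis
    using border_balance_swap[of u v 1] assms by auto
qed

theorem mainTheorem10:
  fixes u v :: "letter list" and n :: nat
  assumes "n \<ge> 2" and "length u = n" and "length v = n"
    and "\<exists>c. \<bar>int (occ u c) - int (occ v c)\<bar> = 1"
  shows "\<not> MAU u v"
proof
  assume "MAU u v"
  then have no_uv: "\<not> (\<exists>x y. internal_abel_border u v x y)"
    and no_vu: "\<not> (\<exists>x y. internal_abel_border v u x y)"
    unfolding MAU_def using external_abel_border_if_swapped_internal by blast+
  define d where "d = int (occ u a) - int (occ v a)"
  have "\<bar>d\<bar> = 1"
    using assms abs_occ_diff_letter_independent unfolding d_def by metis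
  then have "border_balance u v 1 = - d" "border_balance v u 1 = d"
    using border_balance_1[of u v] border_balance_1[of v u] no_uv no_vu assms
    unfolding d_def by auto
  moreover have "border_balance u v (n - 1) - border_balance v u 1 = d"
    using border_balance_swap[of u v "n - 1"] assms unfolding d_def by simp
  ultimately have "border_balance u v 1 * border_balance u v (n - 1) \<le> 0"
    using \<open>\<bar>d\<bar> = 1\<close> by (auto simp: abs_if)
  then obtain k where "1 \<le> k" "k \<le> n - 1" "border_balance u v k = 0"
    using int_steps_zero_between[of 1 "n - 1" "border_balance u v"] border_balance_step assms(1)
    by force
  moreover have "k < n" using \<open>k \<le> n - 1\<close> \<open>n \<ge> 2\<close> by linarith
  ultimately show False
    using internal_abel_border_if_border_balance_0[of u v k] no_uv assms by auto
qed

end
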